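(* Let $k\ge 2$ be an integer and let $P=(p_{ij})$ be the $2^k\times 2^k$ matrix with $p_{ij}=1$ if there is $n\in\{1,\dots,2^k\}$ with $i=\sigma^{-1}_{2^k}(n)$ and $j=\sigma^{-1}_{2^k}(n-1)$ (with the convention $\sigma^{-1}_{2^k}(0)=\sigma^{-1}_{2^k}(2^k)$), and $p_{ij}=0$ otherwise. Then: (i) for every $m=1,\dots,2^{k-2}$, the position $(\sigma^{-1}_{2^k}(4m-3),\sigma^{-1}_{2^k}(4m-4))$ lies in rows $1,\dots,2^{k-2}$ and columns $2^{k-1}+1,\dots,2^{k-1}+2^{k-2}$; (ii) for every $m=1,\dots,2^{k-2}$, the position $(\sigma^{-1}_{2^k}(4m-1),\sigma^{-1}_{2^k}(4m-2))$ lies in rows $2^{k-2}+1,\dots,2^{k-1}$ and columns $2^{k-1}+2^{k-2}+1,\dots,2^{k}$; (iii) for every $m=1,\dots,2^{k-1}$, the position $(\sigma^{-1}_{2^k}(2m),\sigma^{-1}_{2^k}(2m-1))$ lies in rows $2^{k-1}+1,\dots,2^{k}$ and columns $1,\dots,2^{k-1}$. Consequently, partitioning rows into consecutive groups of sizes $2^{k-2},2^{k-2},2^{k-1}$ and columns into consecutive groups of sizes $2^{k-1},2^{k-2},2^{k-2}$, $$P=\begin{pmatrix}0 & B_{2^{k-2}} & 0\\ 0 & 0 & C_{2^{k-2}}\\ C^*_{2^{k-1}} & 0 & 0\end{pmatrix},$$ where the square blocks $B_{2^{k-2}}$, $C_{2^{k-2}}$, $C^*_{2^{k-1}}$ contain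 exactly the $1$-entries of $P$ at the positions listed in (i), (ii), (iii) respectively, and all other entries of $P$ are zero.
   Context: For every integer $k\ge 0$ the map $\sigma^{-1}_{2^k}:\{1,\dots,2^k\}\to\{1,\dots,2^k\}$ is defined recursively by $\sigma^{-1}_{2^0}(1)=1$ and, for $k\ge 1$ and $1\le n\le 2^{k-1}$, $\sigma^{-1}_{2^k}(2n-1)=\sigma^{-1}_{2^{k-1}}(n)$ and $\sigma^{-1}_{2^k}(2n)=2^k+1-\sigma^{-1}_{2^{k-1}}(n)$; it is a permutation of $\{1,\dots,2^k\}$. The matrix $P$ is the permutation matrix of the permutation $\sigma^{-1}_{2^k}(n+1)\mapsto\sigma^{-1}_{2^k}(n)$ (indices mod $2^k$), i.e. of the inverse of the "disordered permutation" $\sigma^{-1}_{2^k}(n)\mapsto\sigma^{-1}_{2^k}(n+1)$ describing one step of the dynamics on the superstable $2^k$-periodic orbit of a period-doubling cascade. *)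

theory Defs
  imports Main
begin

text \<open>sigma_inv k n is the map sigma^{-1}_{2^k} on {1..2^k} (values outside this range
are irrelevant).\<close>
fun sigma_inv :: "nat \<Rightarrow> nat \<Rightarrow> nat" where
  "sigma_inv 0 n = 1"
| "sigma_inv (Suc k) n =
     (if odd n then sigma_inv k ((n + 1) div 2)
      else 2 ^ Suc k + 1 - sigma_inv k (n div 2))"

definition sigma_inv0 :: "nat \<Rightarrow> nat \<Rightarrow> nat" where
  "sigma_inv0 k n = (if n = 0 then sigma_inv k (2 ^ k) else sigma_inv k n)"

text \<open>The 2^k x 2^k matrix P, indexed by i, j in {1..2^k}.\<close>
definition Pmat :: "nat \<Rightarrow> nat \<Rightarrow> nat \<Rightarrow> nat" where
  "Pmat k i j = (if \<exists>n\<in>{1..2 ^ k}. i = sigma_inv0 k n \<and> j = sigma_inv0 k (n - 1) then 1 else 0)"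

end

theory Submission
  imports Defs
begin

text \<open>Writing \<open>k = t + 2\<close>, two unfoldings of the recursion express \<open>\<sigma>\<^sup>-\<^sup>1\<^sub>2\<^sub>^\<^sub>k\<close> at the
  residues \<open>4m-3, 4m-2, 4m-1, 4m\<close> through \<open>s = \<sigma>\<^sup>-\<^sup>1\<^sub>2\<^sub>^\<^sub>t(m) \<in> {1..2^t}\<close>, namely as
  \<open>s\<close>, \<open>2^k + 1 - s\<close>, \<open>2^(k-1) + 1 - s\<close> and \<open>2^(k-1) + s\<close>; each lands in the claimed
  quarter or half of \<open>{1..2^k}\<close>. The description of \<open>P\<close> follows because the steps
  \<open>n-1 \<mapsto> n\<close>, \<open>n \<in> {1..2^k}\<close>, are split by the residue of \<open>n\<close> modulo 4 exactly into the
  three families of positions.\<close>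

lemma sigma_inv_bounds: "1 \<le> sigma_inv k n \<and> sigma_inv k n \<le> 2 ^ k"
proof (induction k arbitrary: n)
  case 0
  then show ?case by simp
next
  case (Suc k)
  show ?case using Suc[of "(n + 1) div 2"] Suc[of "n div 2"] by auto
qed

lemma sigma_inv_Suc_odd:
  assumes "m \<ge> 1"
  shows "sigma_inv (Suc k) (2 * m - 1) = sigma_inv k m"
proof -
  have "odd (2 * m - 1)" "(2 * m - 1 + 1) div 2 = m" using assms by presburger+
  then show ?thesis by simp
qed

lemma sigma_inv_Suc_even: "sigma_inv (Suc k) (2 * m) = 2 ^ Suc k + 1 - sigma_inv k m"
  by simp

lemma sigma_inv_4m_minus_3:
  assumes "m \<ge> 1"
  shows "sigma_inv (Suc (Suc t)) (4 * m - 3) = sigma_inv t m"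
proof -
  have "4 * m - 3 = 2 * (2 * m - 1) - 1" using assms by simp
  then show ?thesis using assms by (simp only: sigma_inv_Suc_odd)
qed

lemma sigma_inv_4m_minus_2:
  assumes "m \<ge> 1"
  shows "sigma_inv (Suc (Suc t)) (4 * m - 2) = 2 ^ Suc (Suc t) + 1 - sigma_inv t m"
proof -
  have "4 * m - 2 = 2 * (2 * m - 1)" using assms by simp
  then show ?thesis using assms by (simp only: sigma_inv_Suc_even sigma_inv_Suc_odd)
qed

lemma sigma_inv_4m_minus_1:
  assumes "m \<ge> 1"
  shows "sigma_inv (Suc (Suc t)) (4 * m - 1) = 2 ^ Suc t + 1 - sigma_inv t m"
proof -
  have "4 * m - 1 = 2 * (2 * m) - 1" using assms by simp
  then show ?thesis using assms by (simp only: sigma_inv_Suc_even sigma_inv_Suc_odd)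
qed

lemma sigma_inv_4m: "sigma_inv (Suc (Suc t)) (4 * m) = 2 ^ Suc t + sigma_inv t m"
proof -
  have "sigma_inv (Suc (Suc t)) (4 * m) = 2 ^ Suc (Suc t) + 1 - (2 ^ Suc t + 1 - sigma_inv t m)"
    using sigma_inv_Suc_even[of "Suc t" "2 * m"] sigma_inv_Suc_even[of t m]
    by (simp add: mult.assoc del: sigma_inv.simps)
  then show ?thesis using sigma_inv_bounds[of t m] by simp
qed

lemma sigma_inv0_nonzero: "n \<noteq> 0 \<Longrightarrow> sigma_inv0 k n = sigma_inv k n"
  by (simp add: sigma_inv0_def)

lemma sigma_inv0_4m_minus_4:
  assumes "m \<in> {1..2 ^ t}"
  shows "sigma_inv0 (Suc (Suc t)) (4 * m - 4) \<in> {2 * 2 ^ t + 1..2 * 2 ^ t + 2 ^ t}"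
proof -
  \<comment> \<open>for \<open>m = 1\<close> the convention \<open>\<sigma>\<^sup>-\<^sup>1(0) = \<sigma>\<^sup>-\<^sup>1(2^k)\<close> replaces \<open>m - 1 = 0\<close> by \<open>2^t\<close>\<close>
  define m' where "m' = (if m = 1 then 2 ^ t else m - 1)"
  have m': "m' \<in> {1..2 ^ t}" using assms by (auto simp: m'_def)
  have "sigma_inv0 (Suc (Suc t)) (4 * m - 4) = sigma_inv (Suc (Suc t)) (4 * m')"
    using assms by (auto simp: m'_def sigma_inv0_def right_diff_distrib' simp del: sigma_inv.simps)
  then show ?thesis using sigma_inv_4m[of t m'] sigma_inv_bounds[of t m'] by simp
qed

lemma sigma_inv0_4m_minus_3:
  assumes "m \<in> {1..2 ^ t}"
  shows "sigma_inv0 (Suc (Suc t)) (4 * m - 3) \<in> {1..2 ^ t}"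
  using assms sigma_inv_4m_minus_3[of m t] sigma_inv_bounds[of t m]
  by (simp add: sigma_inv0_nonzero del: sigma_inv.simps)

lemma sigma_inv0_4m_minus_1:
  assumes "m \<in> {1..2 ^ t}"
  shows "sigma_inv0 (Suc (Suc t)) (4 * m - 1) \<in> {2 ^ t + 1..2 * 2 ^ t}"
  using assms sigma_inv_4m_minus_1[of m t] sigma_inv_bounds[of t m]
  by (auto simp add: sigma_inv0_nonzero simp del: sigma_inv.simps)

lemma sigma_inv0_4m_minus_2:
  assumes "m \<in> {1..2 ^ t}"
  shows "sigma_inv0 (Suc (Suc t)) (4 * m - 2) \<in> {2 * 2 ^ t + 2 ^ t + 1..4 * 2 ^ t}"
  using assms sigma_inv_4m_minus_2[of m t] sigma_inv_bounds[of t m]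
  by (auto simp add: sigma_inv0_nonzero simp del: sigma_inv.simps)

lemma sigma_inv0_even:
  assumes "m \<in> {1..2 ^ k}"
  shows "sigma_inv0 (Suc k) (2 * m) \<in> {2 ^ k + 1..2 ^ Suc k}"
  using assms sigma_inv_Suc_even[of k m] sigma_inv_bounds[of k m]
  by (auto simp add: sigma_inv0_nonzero simp del: sigma_inv.simps)

lemma sigma_inv0_odd:
  assumes "m \<in> {1..2 ^ k}"
  shows "sigma_inv0 (Suc k) (2 * m - 1) \<in> {1..2 ^ k}"
  using assms sigma_inv_Suc_odd[of m k] sigma_inv_bounds[of k m]
  by (auto simp add: sigma_inv0_nonzero simp del: sigma_inv.simps)

lemma successor_steps_by_residue:
  fixes R :: "nat \<Rightarrow> nat \<Rightarrow> bool" and N :: nat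
  shows "(\<exists>n\<in>{1..4 * N}. R n (n - 1)) \<longleftrightarrow>
           (\<exists>m\<in>{1..N}. R (4 * m - 3) (4 * m - 4))
         \<or> (\<exists>m\<in>{1..N}. R (4 * m - 1) (4 * m - 2))
         \<or> (\<exists>m\<in>{1..2 * N}. R (2 * m) (2 * m - 1))"
proof
  assume "\<exists>n\<in>{1..4 * N}. R n (n - 1)"
  then obtain n where n: "n \<in> {1..4 * N}" "R n (n - 1)" by blast
  have "n mod 4 = 1 \<or> n mod 4 = 3 \<or> even n" by presburger
  then consider "n mod 4 = 1" | "n mod 4 = 3" | "even n" by blast
  then show "(\<exists>m\<in>{1..N}. R (4 * m - 3) (4 * m - 4))
         \<or> (\<exists>m\<in>{1..N}. R (4 * m - 1) (4 * m - 2))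
         \<or> (\<exists>m\<in>{1..2 * N}. R (2 * m) (2 * m - 1))"
  proof cases
    case 1
    then have "(n + 3) div 4 \<in> {1..N}" using n(1) by auto
    moreover have "4 * ((n + 3) div 4) - 3 = n" "4 * ((n + 3) div 4) - 4 = n - 1"
      using \<open>n mod 4 = _\<close> by presburger+
    ultimately show ?thesis using n(2) by metis
  next
    case 2
    then have "(n + 1) div 4 \<in> {1..N}" using n(1) by auto
    moreover have "4 * ((n + 1) div 4) - 1 = n" "4 * ((n + 1) div 4) - 2 = n - 1"
      using \<open>n mod 4 = _\<close> by presburger+
    ultimately show ?thesis using n(2) by metis
  next
    case 3
    then have "n div 2 \<in> {1..2 * N}" "2 * (n div 2) = n" using n(1) by auto
    then show ?thesis using n(2) by metis
  qed
next
  assume "(\<exists>m\<in>{1..N}. R (4 * m - 3) (4 * m - 4))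
         \<or> (\<exists>m\<in>{1..N}. R (4 * m - 1) (4 * m - 2))
         \<or> (\<exists>m\<in>{1..2 * N}. R (2 * m) (2 * m - 1))"
  then show "\<exists>n\<in>{1..4 * N}. R n (n - 1)"
  proof (elim disjE bexE)
    fix m assume "m \<in> {1..N}" "R (4 * m - 3) (4 * m - 4)"
    moreover have "4 * m - 3 - 1 = 4 * m - 4" by simp
    ultimately show ?thesis by (intro bexI[of _ "4 * m - 3"]) auto
  next
    fix m assume "m \<in> {1..N}" "R (4 * m - 1) (4 * m - 2)"
    moreover have "4 * m - 1 - 1 = 4 * m - 2" by simp
    ultimately show ?thesis by (intro bexI[of _ "4 * m - 1"]) auto
  next
    fix m assume "m \<in> {1..2 * N}" "R (2 * m) (2 * m - 1)"
    then show ?thesis by (intro bexI[of _ "2 * m"]) auto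
  qed
qed

theorem lemma3:
  fixes k :: nat
  assumes "k \<ge> 2"
  shows "(\<forall>m\<in>{1..2 ^ (k - 2)}.
            sigma_inv0 k (4 * m - 3) \<in> {1..2 ^ (k - 2)} \<and>
            sigma_inv0 k (4 * m - 4) \<in> {2 ^ (k - 1) + 1..2 ^ (k - 1) + 2 ^ (k - 2)})
       \<and> (\<forall>m\<in>{1..2 ^ (k - 2)}.
            sigma_inv0 k (4 * m - 1) \<in> {2 ^ (k - 2) + 1..2 ^ (k - 1)} \<and>
            sigma_inv0 k (4 * m - 2) \<in> {2 ^ (k - 1) + 2 ^ (k - 2) + 1..2 ^ k})
       \<and> (\<forall>m\<in>{1..2 ^ (k - 1)}.
            sigma_inv0 k (2 * m) \<in> {2 ^ (k - 1) + 1..2 ^ k} \<and>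
            sigma_inv0 k (2 * m - 1) \<in> {1..2 ^ (k - 1)})
       \<and> (\<forall>i\<in>{1..2 ^ k}. \<forall>j\<in>{1..2 ^ k}.
            Pmat k i j =
              (if (\<exists>m\<in>{1..2 ^ (k - 2)}.
                     i = sigma_inv0 k (4 * m - 3) \<and> j = sigma_inv0 k (4 * m - 4))
                \<or> (\<exists>m\<in>{1..2 ^ (k - 2)}.
                     i = sigma_inv0 k (4 * m - 1) \<and> j = sigma_inv0 k (4 * m - 2))
                \<or> (\<exists>m\<in>{1..2 ^ (k - 1)}.
                     i = sigma_inv0 k (2 * m) \<and> j = sigma_inv0 k (2 * m - 1))
               then 1 else 0))"
proof -
  obtain t where k: "k = Suc (Suc t)" using assms by (metis add_2_eq_Suc le_Suc_ex)
  then have pow: "2 ^ (k - 2) = (2::nat) ^ t" "2 ^ (k - 1) = 2 * (2::nat) ^ t"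
    "2 ^ k = 4 * (2::nat) ^ t" "2 ^ (k - 1) = (2::nat) ^ Suc t"
    by simp_all
  have "Pmat k i j = (if (\<exists>m\<in>{1..2 ^ (k - 2)}.
                     i = sigma_inv0 k (4 * m - 3) \<and> j = sigma_inv0 k (4 * m - 4))
                \<or> (\<exists>m\<in>{1..2 ^ (k - 2)}.
                     i = sigma_inv0 k (4 * m - 1) \<and> j = sigma_inv0 k (4 * m - 2))
                \<or> (\<exists>m\<in>{1..2 ^ (k - 1)}.
                     i = sigma_inv0 k (2 * m) \<and> j = sigma_inv0 k (2 * m - 1))
               then 1 else 0)" for i j
    using successor_steps_by_residue[where N = "2 ^ t"
        and R = "\<lambda>n n'. i = sigma_inv0 k n \<and> j = sigma_inv0 k n'"]
    unfolding Pmat_def pow(1-3) by simp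
  moreover have "sigma_inv0 k (4 * m - 3) \<in> {1..2 ^ (k - 2)}"
    "sigma_inv0 k (4 * m - 4) \<in> {2 ^ (k - 1) + 1..2 ^ (k - 1) + 2 ^ (k - 2)}"
    "sigma_inv0 k (4 * m - 1) \<in> {2 ^ (k - 2) + 1..2 ^ (k - 1)}"
    "sigma_inv0 k (4 * m - 2) \<in> {2 ^ (k - 1) + 2 ^ (k - 2) + 1..2 ^ k}"
    if "m \<in> {1..2 ^ (k - 2)}" for m
    using that sigma_inv0_4m_minus_3 sigma_inv0_4m_minus_4 sigma_inv0_4m_minus_1
      sigma_inv0_4m_minus_2 unfolding k pow(1-3) by simp_all
  moreover have "sigma_inv0 k (2 * m) \<in> {2 ^ (k - 1) + 1..2 ^ k}"
    "sigma_inv0 k (2 * m - 1) \<in> {1..2 ^ (k - 1)}"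
    if "m \<in> {1..2 ^ (k - 1)}" for m
    using that sigma_inv0_even[of m "Suc t"] sigma_inv0_odd[of m "Suc t"] unfolding k pow(4)
    by simp_all
  ultimately show ?thesis by blast
qed

end
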